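(* For any finite alphabet $\mathfrak{G}$ and any $\mathfrak{G}$-trees $\mathfrak{s}$, $\mathfrak{t}$ such that $\mathfrak{s}\preceq\mathfrak{t}$, the interval $[\mathfrak{s},\mathfrak{t}]$ of the $\mathfrak{G}$-prefix poset is isomorphic as a lattice to $J(P_s)$, where $s := \mathrm{sh}(\lozenge_{|\mathfrak{s}|}[\mathfrak{t}\setminus\mathfrak{s}])$.
   Context: $\mathfrak{G}$ is a finite alphabet (letters with arities $\geq 1$). A $\mathfrak{G}$-tree is either the leaf (the tree with no internal node) or a root decorated by a letter $\mathtt{a}\in\mathfrak{G}$ with $|\mathtt{a}|$ children that are $\mathfrak{G}$-trees; $|\mathfrak{s}|$ is the number of leaves. The $\mathfrak{G}$-prefix poset is the set of $\mathfrak{G}$-trees ordered by $\mathfrak{s}\preceq\mathfrak{t}$ iff $\mathfrak{t}$ is obtained by grafting $\mathfrak{G}$-trees $\mathfrak{r}_1,\dots,\mathfrak{r}_{|\mathfrak{s}|}$ onto the leaves of $\mathfrak{s}$ (left to right); then $\mathfrak{t}\setminus\mathfrak{s} := (\mathfrak{r}_1,\dots,\mathfrak{r}_{|\mathfrak{s}|})$, and its intervals are lattices (with meet = largest common part from the root and join = superimposition). $\lozenge_k[\mathfrak{r}_1,\dots,\mathfrak{r}_k]$ is the tree with root decorated by a new letter $\lozenge_k$ of arity $k$ and children $\mathfrak{r}_1,\dots,\mathfrak{r}_k$. A shadow is a finite (possibly empty) multiset of shadows, i.e. a nonplanar undecorated rooted tree. For a tree $\mathfrak{t}$ different from the leaf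 with root of arity $k$, $\mathrm{sh}(\mathfrak{t})$ is the multiset of the $\mathrm{sh}(\mathfrak{t}(i))$ over those $i\in[k]$ such that the $i$-th subtree $\mathfrak{t}(i)$ is not the leaf. For a shadow $s$, $P_s$ is the poset on the nodes of $s$ other than its root, where $u<v$ iff $u$ is an ancestor of $v$. For a poset $P$, $J(P)$ is the lattice of order ideals (down-closed subsets) of $P$ ordered by inclusion, with intersection and union as meet and join. *)

theory Defs
  imports Main "HOL-Library.Multiset"
begin

datatype 'a tree = Leaf | Node 'a "'a tree list"

fun gtree :: "'a set \<Rightarrow> ('a \<Rightarrow> nat) \<Rightarrow> 'a tree \<Rightarrow> bool" where
  "gtree G ar Leaf = True"
| "gtree G ar (Node a ts) =
     (a \<in> G \<and> length ts = ar a \<and> (\<forall>c\<in>set ts. gtree G ar c))"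

fun nleaves :: "'a tree \<Rightarrow> nat" where
  "nleaves Leaf = 1"
| "nleaves (Node a ts) = sum_list (map nleaves ts)"

fun graft :: "'a tree \<Rightarrow> 'a tree list \<Rightarrow> 'a tree"
and graft_list :: "'a tree list \<Rightarrow> 'a tree list \<Rightarrow> 'a tree list" where
  "graft Leaf rs = hd rs"
| "graft (Node a ts) rs = Node a (graft_list ts rs)"
| "graft_list [] rs = []"
| "graft_list (t # ts) rs =
     graft t (take (nleaves t) rs) # graft_list ts (drop (nleaves t) rs)"

definition gprefix :: "'a set \<Rightarrow> ('a \<Rightarrow> nat) \<Rightarrow> 'a tree \<Rightarrow> 'a tree \<Rightarrow> bool" where
  "gprefix G ar s t \<longleftrightarrow>
     (\<exists>rs. length rs = nleaves s \<and> (\<forall>r\<in>set rs. gtree G ar r) \<and> t = graft s rs)"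

definition tree_diff :: "'a tree \<Rightarrow> 'a tree \<Rightarrow> 'a tree list" where
  "tree_diff t s = (THE rs. length rs = nleaves s \<and> t = graft s rs)"

function tmeet :: "'a tree \<Rightarrow> 'a tree \<Rightarrow> 'a tree" where
  "tmeet (Node a ts) (Node b us) =
     (if a = b \<and> length ts = length us
      then Node a (map (\<lambda>(x, y). tmeet x y) (zip ts us)) else Leaf)"
| "tmeet Leaf u = Leaf"
| "tmeet (Node a ts) Leaf = Leaf"
  by pat_completeness auto
termination
  by (relation "measure (\<lambda>(x, y). size x)")
     (auto dest!: set_zip_leftD simp: less_Suc_eq_le intro: size_list_estimation')

function tjoin :: "'a tree \<Rightarrow> 'a tree \<Rightarrow> 'a tree" where
  "tjoin Leaf u = u"
| "tjoin (Node a ts) Leaf = Node a ts"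
| "tjoin (Node a ts) (Node b us) = Node a (map (\<lambda>(x, y). tjoin x y) (zip ts us))"
  by pat_completeness auto
termination
  by (relation "measure (\<lambda>(x, y). size x)")
     (auto dest!: set_zip_leftD simp: less_Suc_eq_le intro: size_list_estimation')

text \<open>A shadow is a finite multiset of shadows (nonplanar undecorated rooted tree).\<close>
datatype shadow = Sh "shadow multiset"

fun sh :: "'b tree \<Rightarrow> shadow" where
  "sh Leaf = Sh {#}"
| "sh (Node a ts) = Sh (mset (map sh (filter (\<lambda>c. c \<noteq> Leaf) ts)))"

text \<open>The tree with root a new letter \<lozenge>_k (here None) and children rs.\<close>
definition diamond :: "'a tree list \<Rightarrow> 'a option tree" where
  "diamond rs = Node None (map (map_tree Some) rs)"

text \<open>Nodes of a shadow, as paths from the root; a step chooses a child subtree c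
  together with an index i < multiplicity of c, to distinguish equal copies.
  The root is the empty path.\<close>
inductive shadow_node :: "shadow \<Rightarrow> (shadow \<times> nat) list \<Rightarrow> bool" where
  root: "shadow_node s []"
| child: "c \<in># M \<Longrightarrow> i < count M c \<Longrightarrow> shadow_node c p \<Longrightarrow> shadow_node (Sh M) ((c, i) # p)"

text \<open>Carrier of P_s: nodes other than the root.  Order: u \<le> v iff u is an
  ancestor of v or u = v.\<close>
definition Ps_carrier :: "shadow \<Rightarrow> (shadow \<times> nat) list set" where
  "Ps_carrier s = {p. shadow_node s p \<and> p \<noteq> []}"

definition Ps_le :: "(shadow \<times> nat) list \<Rightarrow> (shadow \<times> nat) list \<Rightarrow> bool" where
  "Ps_le u v \<longleftrightarrow> (\<exists>q. v = u @ q)"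

definition order_ideals :: "'c set \<Rightarrow> ('c \<Rightarrow> 'c \<Rightarrow> bool) \<Rightarrow> 'c set set" where
  "order_ideals A le = {I. I \<subseteq> A \<and> (\<forall>x\<in>I. \<forall>y\<in>A. le y x \<longrightarrow> y \<in> I)}"

end

theory Submission
  imports Defs "HOL-Library.Sublist"
begin

text \<open>
  Describe a tree u below t by the set nodes u of addresses (paths of child indices) of its
  internal nodes. Below t this description is faithful: the prefix order, meet and join become
  inclusion, intersection and union, and the sets that occur are exactly the prefix-closed subsets
  of nodes t. Hence u \<mapsto> nodes u - nodes s maps the interval [s, t] onto the order ideals of
  the poset nodes t - nodes s, ordered by ancestry (list prefix). This poset is the disjoint union
  of the mutually incomparable node posets of the grafted trees r_1, ..., r_k of t \ s,
  and by induction on trees the node poset of each r_i is isomorphic to the node poset of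
  its shadow. So nodes t - nodes s is isomorphic to the poset of non-root nodes of the shadow of
  \<lozenge>[r_1, ..., r_k], and transporting order ideals along this isomorphism gives
  the lattice isomorphism.
\<close>

section \<open>The structural prefix order and the cut t \ s\<close>

inductive tree_prefix :: "'a tree \<Rightarrow> 'a tree \<Rightarrow> bool" where
  Leaf [simp]: "tree_prefix Leaf t"
| Node: "list_all2 tree_prefix us ts \<Longrightarrow> tree_prefix (Node a us) (Node a ts)"
monos list.rel_mono

inductive_simps tree_prefix_Node_Node [simp]: "tree_prefix (Node a us) (Node b ts)"

lemma tree_prefix_Leaf_iff [simp]: "tree_prefix u Leaf \<longleftrightarrow> u = Leaf"
  by (auto elim: tree_prefix.cases)

lemma tree_prefix_antisym: "tree_prefix u v \<Longrightarrow> tree_prefix v u \<Longrightarrow> u = v"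
proof (induction rule: tree_prefix.induct)
  case (Leaf t)
  then show ?case by (cases t) auto
next
  case (Node us ts a)
  then show ?case by (auto simp: list_all2_conv_all_nth intro!: nth_equalityI)
qed

lemma gtree_tree_prefix: "tree_prefix u t \<Longrightarrow> gtree G ar t \<Longrightarrow> gtree G ar u"
  by (induction rule: tree_prefix.induct) (auto simp: list_all2_conv_all_nth all_set_conv_all_nth)

fun tree_cut :: "'a tree \<Rightarrow> 'a tree \<Rightarrow> 'a tree list"
and forest_cut :: "'a tree list \<Rightarrow> 'a tree list \<Rightarrow> 'a tree list" where
  "tree_cut Leaf t = [t]"
| "tree_cut (Node a ss) Leaf = []"
| "tree_cut (Node a ss) (Node b ts) = forest_cut ss ts"
| "forest_cut [] ts = []"
| "forest_cut (s # ss) [] = []"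
| "forest_cut (s # ss) (t # ts) = tree_cut s t @ forest_cut ss ts"

lemma length_tree_cut:
  fixes s t :: "'a tree" and ss ts :: "'a tree list"
  shows "tree_prefix s t \<Longrightarrow> length (tree_cut s t) = nleaves s"
    and "list_all2 tree_prefix ss ts \<Longrightarrow> length (forest_cut ss ts) = sum_list (map nleaves ss)"
  by (induction s t and ss ts rule: tree_cut_forest_cut.induct) auto

lemma graft_tree_cut:
  fixes s t :: "'a tree" and ss ts :: "'a tree list"
  shows "tree_prefix s t \<Longrightarrow> graft s (tree_cut s t) = t"
    and "list_all2 tree_prefix ss ts \<Longrightarrow> graft_list ss (forest_cut ss ts) = ts"
  by (induction s t and ss ts rule: tree_cut_forest_cut.induct) (auto simp: length_tree_cut)

lemma gtree_tree_cut:
  fixes s t :: "'a tree" and ss ts :: "'a tree list"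
  shows "tree_prefix s t \<Longrightarrow> gtree G ar t \<Longrightarrow> r \<in> set (tree_cut s t) \<Longrightarrow> gtree G ar r"
    and "list_all2 tree_prefix ss ts \<Longrightarrow> \<forall>t\<in>set ts. gtree G ar t \<Longrightarrow> r \<in> set (forest_cut ss ts)
      \<Longrightarrow> gtree G ar r"
  by (induction s t and ss ts rule: tree_cut_forest_cut.induct) auto

lemma tree_cut_graft:
  fixes s :: "'a tree" and ss rs :: "'a tree list"
  shows "length rs = nleaves s \<Longrightarrow> tree_cut s (graft s rs) = rs"
    and "length rs = sum_list (map nleaves ss) \<Longrightarrow> forest_cut ss (graft_list ss rs) = rs"
proof (induction s rs and ss rs rule: graft_graft_list.induct)
  case (1 rs)
  then show ?case by (cases rs) auto
next
  case (4 t ts rs)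
  then show ?case by (cases "graft t (take (nleaves t) rs)") (auto simp: min_def)
qed auto

lemma tree_prefix_graft:
  fixes s :: "'a tree" and ss rs :: "'a tree list"
  shows "length rs = nleaves s \<Longrightarrow> tree_prefix s (graft s rs)"
    and "length rs = sum_list (map nleaves ss) \<Longrightarrow> list_all2 tree_prefix ss (graft_list ss rs)"
  by (induction s rs and ss rs rule: graft_graft_list.induct) (auto simp: min_def)

lemma gprefix_iff_tree_prefix:
  assumes "gtree G ar t"
  shows "gprefix G ar u t \<longleftrightarrow> tree_prefix u t"
  using assms tree_prefix_graft(1) length_tree_cut(1) graft_tree_cut(1) gtree_tree_cut(1)
  unfolding gprefix_def by metis

lemma tree_diff_eq_tree_cut: "tree_prefix s t \<Longrightarrow> tree_diff t s = tree_cut s t"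
  unfolding tree_diff_def
  by (rule the_equality) (auto simp: length_tree_cut graft_tree_cut tree_cut_graft)

section \<open>Node addresses\<close>

function nodes :: "'a tree \<Rightarrow> nat list set" where
  "nodes Leaf = {}"
| "nodes (Node a ts) = insert [] (\<Union>i<length ts. (#) i ` nodes (ts ! i))"
  by pat_completeness auto
termination
  by (relation "measure size") (auto simp: less_Suc_eq_le intro!: size_list_estimation'[OF nth_mem])

lemma nodes_eq_empty_iff [simp]: "nodes t = {} \<longleftrightarrow> t = Leaf"
  by (cases t) auto

lemma Nil_in_nodes_iff [simp]: "[] \<in> nodes t \<longleftrightarrow> t \<noteq> Leaf"
  by (cases t) auto

lemma Cons_in_nodes_Node_iff [simp]:
  "i # p \<in> nodes (Node a ts) \<longleftrightarrow> i < length ts \<and> p \<in> nodes (ts ! i)"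
  by auto

declare nodes.simps(2) [simp del]

lemma nodes_prefix_closed: "p @ q \<in> nodes t \<Longrightarrow> p \<in> nodes t"
proof (induction p arbitrary: t)
  case Nil
  then show ?case by (cases t) auto
next
  case (Cons i p)
  then show ?case by (cases t) auto
qed

lemma nodes_mono: "tree_prefix u v \<Longrightarrow> nodes u \<subseteq> nodes v"
proof (induction rule: tree_prefix.induct)
  case (Node us ts a)
  show ?case
  proof
    fix p assume "p \<in> nodes (Node a us)"
    with Node show "p \<in> nodes (Node a ts)"
      by (cases p) (auto simp: list_all2_conv_all_nth)
  qed
qed simp

lemma tree_prefix_if_nodes_subset:
  "tree_prefix u t \<Longrightarrow> tree_prefix v t \<Longrightarrow> nodes u \<subseteq> nodes v \<Longrightarrow> tree_prefix u v"
proof (induction t arbitrary: u v)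
  case (Node b ts)
  show ?case
  proof (cases u)
    case (Node a us)
    with Node.prems obtain vs where v: "v = Node b vs" by (cases v) auto
    have "tree_prefix (us ! i) (vs ! i)" if "i < length ts" for i
    proof (rule Node.IH)
      show "ts ! i \<in> set ts" using that by simp
      show "tree_prefix (us ! i) (ts ! i)" "tree_prefix (vs ! i) (ts ! i)"
        using Node.prems that by (auto simp: \<open>u = Node a us\<close> v list_all2_conv_all_nth)
      show "nodes (us ! i) \<subseteq> nodes (vs ! i)"
      proof
        fix p assume "p \<in> nodes (us ! i)"
        with Node.prems that have "i # p \<in> nodes v"
          by (auto simp: \<open>u = Node a us\<close> list_all2_lengthD)
        then show "p \<in> nodes (vs ! i)" by (simp add: v)
      qed
    qed
    with Node.prems show ?thesis
      by (auto simp: \<open>u = Node a us\<close> v list_all2_conv_all_nth)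
  qed simp
qed simp

lemma inj_on_nodes: "inj_on nodes {u. tree_prefix u t}"
proof (rule inj_onI)
  fix u v assume "u \<in> {u. tree_prefix u t}" "v \<in> {u. tree_prefix u t}" "nodes u = nodes v"
  then show "u = v"
    using tree_prefix_if_nodes_subset[of u t v] tree_prefix_if_nodes_subset[of v t u]
    by (auto intro: tree_prefix_antisym)
qed

lemma ex_tree_prefix_nodes_eq:
  assumes "S \<subseteq> nodes t" and "\<And>p q. p @ q \<in> S \<Longrightarrow> p \<in> S"
  shows "\<exists>u. tree_prefix u t \<and> nodes u = S"
  using assms
proof (induction t arbitrary: S)
  case Leaf
  then show ?case by auto
next
  case (Node a ts)
  show ?case
  proof (cases "[] \<in> S")
    case False
    with Node.prems(2) have "S = {}" by (metis append_Nil ex_in_conv)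
    then show ?thesis using tree_prefix.Leaf by fastforce
  next
    case True
    have "\<forall>i<length ts. \<exists>u. tree_prefix u (ts ! i) \<and> nodes u = {p. i # p \<in> S}"
      using Node.prems by (intro allI impI Node.IH) auto
    then obtain us where us: "length us = length ts"
      "\<forall>i<length ts. tree_prefix (us ! i) (ts ! i) \<and> nodes (us ! i) = {p. i # p \<in> S}"
      by (auto simp: Skolem_list_nth)
    have "nodes (Node a us) = S"
    proof (intro set_eqI)
      fix p
      show "p \<in> nodes (Node a us) \<longleftrightarrow> p \<in> S"
        using True us Node.prems(1) by (cases p) auto
    qed
    moreover have "tree_prefix (Node a us) (Node a ts)"
      using us by (auto simp: list_all2_conv_all_nth)
    ultimately show ?thesis by blast
  qed
qed

lemma nodes_tmeet:
  "tree_prefix x t \<Longrightarrow> tree_prefix y t \<Longrightarrow> nodes (tmeet x y) = nodes x \<inter> nodes y"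
proof (induction t arbitrary: x y)
  case (Node b ts)
  show ?case
  proof (cases x; cases y)
    fix a xs c ys assume x: "x = Node a xs" and y: "y = Node c ys"
    have "p \<in> nodes (tmeet x y) \<longleftrightarrow> p \<in> nodes x \<and> p \<in> nodes y" for p
      using Node.prems Node.IH[OF nth_mem] by (cases p) (auto simp: x y list_all2_conv_all_nth)
    then show ?thesis by blast
  qed auto
qed simp

lemma nodes_tjoin:
  "tree_prefix x t \<Longrightarrow> tree_prefix y t \<Longrightarrow> nodes (tjoin x y) = nodes x \<union> nodes y"
proof (induction t arbitrary: x y)
  case (Node b ts)
  show ?case
  proof (cases x; cases y)
    fix a xs c ys assume x: "x = Node a xs" and y: "y = Node c ys"
    have "p \<in> nodes (tjoin x y) \<longleftrightarrow> p \<in> nodes x \<or> p \<in> nodes y" for p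
      using Node.prems Node.IH[OF nth_mem] by (cases p) (auto simp: x y list_all2_conv_all_nth)
    then show ?thesis by blast
  qed auto
qed simp

section \<open>Intervals as lattices of order ideals\<close>

lemma bij_betw_image_order_ideals:
  assumes bij: "bij_betw f A B"
    and le: "\<And>x y. x \<in> A \<Longrightarrow> y \<in> A \<Longrightarrow> le' (f x) (f y) \<longleftrightarrow> le x y"
  shows "bij_betw ((`) f) (order_ideals A le) (order_ideals B le')"
proof -
  have inj: "inj_on f A" and B: "B = f ` A" using bij by (auto simp: bij_betw_def)
  have "inj_on ((`) f) (order_ideals A le)"
    using inj_on_image_Pow[OF inj] by (rule inj_on_subset) (auto simp: order_ideals_def)
  moreover have "(`) f ` order_ideals A le = order_ideals B le'"
  proof (intro equalityI subsetI)
    fix J assume "J \<in> (`) f ` order_ideals A le"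
    then obtain I where "I \<in> order_ideals A le" "J = f ` I" by blast
    then show "J \<in> order_ideals B le'"
      using le by (auto simp: order_ideals_def B)
  next
    fix J assume J: "J \<in> order_ideals B le'"
    then have "J = f ` {x \<in> A. f x \<in> J}" and "{x \<in> A. f x \<in> J} \<in> order_ideals A le"
      using le by (auto simp: order_ideals_def B)
    then show "J \<in> (`) f ` order_ideals A le" by blast
  qed
  ultimately show ?thesis by (simp add: bij_betw_def)
qed

lemma bij_betw_interval_order_ideals:
  assumes st: "tree_prefix s t"
  shows "bij_betw (\<lambda>u. nodes u - nodes s) {u. tree_prefix s u \<and> tree_prefix u t}
           (order_ideals (nodes t - nodes s) prefix)"
  unfolding bij_betw_def
proof
  show "inj_on (\<lambda>u. nodes u - nodes s) {u. tree_prefix s u \<and> tree_prefix u t}"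
  proof (rule inj_onI)
    fix u v assume u: "u \<in> {u. tree_prefix s u \<and> tree_prefix u t}"
      and v: "v \<in> {u. tree_prefix s u \<and> tree_prefix u t}"
      and eq: "nodes u - nodes s = nodes v - nodes s"
    from u v have "nodes s \<subseteq> nodes u" "nodes s \<subseteq> nodes v" by (auto dest: nodes_mono)
    with eq have "nodes u = nodes v" by blast
    with u v show "u = v" using inj_on_nodes[of t] by (auto dest: inj_onD)
  qed
  show "(\<lambda>u. nodes u - nodes s) ` {u. tree_prefix s u \<and> tree_prefix u t}
    = order_ideals (nodes t - nodes s) prefix"
  proof (intro equalityI subsetI)
    fix I assume "I \<in> (\<lambda>u. nodes u - nodes s) ` {u. tree_prefix s u \<and> tree_prefix u t}"
    then obtain u where "tree_prefix u t" "I = nodes u - nodes s" by blast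
    then show "I \<in> order_ideals (nodes t - nodes s) prefix"
      using nodes_mono[of u t] by (auto simp: order_ideals_def prefix_def dest: nodes_prefix_closed)
  next
    fix I assume I: "I \<in> order_ideals (nodes t - nodes s) prefix"
    have "nodes s \<union> I \<subseteq> nodes t" using I nodes_mono[OF st] by (auto simp: order_ideals_def)
    moreover have "p \<in> nodes s \<union> I" if "p @ q \<in> nodes s \<union> I" for p q
      using that I nodes_prefix_closed[of p q t] nodes_prefix_closed[of p q s]
      by (auto simp: order_ideals_def prefix_def)
    ultimately obtain u where u: "tree_prefix u t" "nodes u = nodes s \<union> I"
      using ex_tree_prefix_nodes_eq by metis
    then have "tree_prefix s u" using st tree_prefix_if_nodes_subset by blast
    moreover have "I = nodes u - nodes s" using u I by (auto simp: order_ideals_def)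
    ultimately show "I \<in> (\<lambda>u. nodes u - nodes s) ` {u. tree_prefix s u \<and> tree_prefix u t}"
      using u by blast
  qed
qed

section \<open>Node posets of trees and of shadows\<close>

definition prefix_iso :: "'a list set \<Rightarrow> 'b list set \<Rightarrow> bool" where
  "prefix_iso A B \<longleftrightarrow>
     (\<exists>f. bij_betw f A B \<and> (\<forall>x\<in>A. \<forall>y\<in>A. prefix (f x) (f y) \<longleftrightarrow> prefix x y))"

lemma prefix_iso_image:
  assumes "inj_on f A" and "\<And>x y. x \<in> A \<Longrightarrow> y \<in> A \<Longrightarrow> prefix (f x) (f y) \<longleftrightarrow> prefix x y"
  shows "prefix_iso A (f ` A)"
  using assms by (auto simp: prefix_iso_def bij_betw_def)

lemma prefix_iso_empty: "prefix_iso {} {}"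
  by (auto simp: prefix_iso_def bij_betw_def)

lemma prefix_iso_sym:
  assumes "prefix_iso A B"
  shows "prefix_iso B A"
proof -
  obtain f where f: "bij_betw f A B" and le: "\<forall>x\<in>A. \<forall>y\<in>A. prefix (f x) (f y) \<longleftrightarrow> prefix x y"
    using assms by (auto simp: prefix_iso_def)
  have "bij_betw (inv_into A f) B A" using f by (rule bij_betw_inv_into)
  moreover have "prefix (inv_into A f x) (inv_into A f y) \<longleftrightarrow> prefix x y" if "x \<in> B" "y \<in> B" for x y
  proof -
    have "inv_into A f x \<in> A" "inv_into A f y \<in> A" "f (inv_into A f x) = x" "f (inv_into A f y) = y"
      using that f by (auto simp: bij_betw_def inv_into_into f_inv_into_f)
    then show ?thesis using le by metis
  qed
  ultimately show ?thesis by (auto simp: prefix_iso_def)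
qed

lemma prefix_iso_trans:
  assumes "prefix_iso A B" and "prefix_iso B C"
  shows "prefix_iso A C"
proof -
  obtain f where f: "bij_betw f A B" "\<forall>x\<in>A. \<forall>y\<in>A. prefix (f x) (f y) \<longleftrightarrow> prefix x y"
    using assms(1) by (auto simp: prefix_iso_def)
  obtain g where g: "bij_betw g B C" "\<forall>x\<in>B. \<forall>y\<in>B. prefix (g x) (g y) \<longleftrightarrow> prefix x y"
    using assms(2) by (auto simp: prefix_iso_def)
  have "bij_betw (g \<circ> f) A C" using f(1) g(1) by (rule bij_betw_trans)
  moreover have "\<forall>x\<in>A. \<forall>y\<in>A. prefix ((g \<circ> f) x) ((g \<circ> f) y) \<longleftrightarrow> prefix x y"
    using f g by (auto simp: bij_betw_def)
  ultimately show ?thesis by (auto simp: prefix_iso_def)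
qed

lemma prefix_iso_Un:
  assumes "prefix_iso A1 B1" and "prefix_iso A2 B2"
    and "\<And>x y. x \<in> A1 \<Longrightarrow> y \<in> A2 \<Longrightarrow> \<not> prefix x y \<and> \<not> prefix y x"
    and "\<And>x y. x \<in> B1 \<Longrightarrow> y \<in> B2 \<Longrightarrow> \<not> prefix x y \<and> \<not> prefix y x"
  shows "prefix_iso (A1 \<union> A2) (B1 \<union> B2)"
proof -
  obtain f where f: "bij_betw f A1 B1" "\<forall>x\<in>A1. \<forall>y\<in>A1. prefix (f x) (f y) \<longleftrightarrow> prefix x y"
    using assms(1) by (auto simp: prefix_iso_def)
  obtain g where g: "bij_betw g A2 B2" "\<forall>x\<in>A2. \<forall>y\<in>A2. prefix (g x) (g y) \<longleftrightarrow> prefix x y"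
    using assms(2) by (auto simp: prefix_iso_def)
  have disj: "A1 \<inter> A2 = {}" "B1 \<inter> B2 = {}"
    using assms(3,4) prefix_order.refl by blast+
  define h where "h x = (if x \<in> A1 then f x else g x)" for x
  have "bij_betw h A1 B1 \<longleftrightarrow> bij_betw f A1 B1" by (rule bij_betw_cong) (simp add: h_def)
  moreover have "bij_betw h A2 B2 \<longleftrightarrow> bij_betw g A2 B2"
    by (rule bij_betw_cong) (use disj in \<open>auto simp: h_def\<close>)
  ultimately have "bij_betw h (A1 \<union> A2) (B1 \<union> B2)"
    using f(1) g(1) disj(2) by (blast intro: bij_betw_combine)
  moreover have "prefix (h x) (h y) \<longleftrightarrow> prefix x y" if "x \<in> A1 \<union> A2" "y \<in> A1 \<union> A2" for x y
  proof -
    have "x \<in> A1 \<Longrightarrow> f x \<in> B1" "y \<in> A1 \<Longrightarrow> f y \<in> B1" "x \<in> A2 \<Longrightarrow> g x \<in> B2" "y \<in> A2 \<Longrightarrow> g y \<in> B2"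
      using f(1) g(1) by (auto simp: bij_betw_def)
    then show ?thesis
      using that f(2) g(2) assms(3,4) disj unfolding h_def by (cases "x \<in> A1"; cases "y \<in> A1") auto
  qed
  ultimately show ?thesis by (auto simp: prefix_iso_def)
qed

lemma prefix_iso_insert_Nil:
  assumes "prefix_iso A B" and "[] \<notin> A" and "[] \<notin> B"
  shows "prefix_iso (insert [] A) (insert [] B)"
proof -
  obtain f where f: "bij_betw f A B" "\<forall>x\<in>A. \<forall>y\<in>A. prefix (f x) (f y) \<longleftrightarrow> prefix x y"
    using assms(1) by (auto simp: prefix_iso_def)
  define h where "h x = (if x = [] then [] else f x)" for x
  have "bij_betw h A B \<longleftrightarrow> bij_betw f A B"
    by (rule bij_betw_cong) (use assms(2) in \<open>auto simp: h_def\<close>)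
  moreover have "bij_betw h {[]} {[]}" by (simp add: h_def)
  ultimately have "bij_betw h (insert [] A) (insert [] B)"
    using f(1) bij_betw_combine[of h A B "{[]}" "{[]}"] assms(3) by simp
  moreover have "prefix (h x) (h y) \<longleftrightarrow> prefix x y" if "x \<in> insert [] A" "y \<in> insert [] A" for x y
  proof -
    have "x \<in> A \<Longrightarrow> f x \<noteq> []" "y \<in> A \<Longrightarrow> f y \<noteq> []"
      using f(1) assms(3) by (metis bij_betw_apply)+
    then show ?thesis using that f(2) assms(2) unfolding h_def by auto
  qed
  ultimately show ?thesis by (auto simp: prefix_iso_def)
qed

lemma prefix_iso_Cons_image: "prefix_iso A ((#) a ` A)"
  by (rule prefix_iso_image) (auto simp: inj_on_def)

fun map_head :: "('a \<Rightarrow> 'a) \<Rightarrow> 'a list \<Rightarrow> 'a list" where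
  "map_head f [] = []"
| "map_head f (x # xs) = f x # xs"

lemma prefix_iso_map_head_image:
  assumes "inj f"
  shows "prefix_iso A (map_head f ` A)"
proof (rule prefix_iso_image)
  show "inj_on (map_head f) A"
  proof (rule inj_onI)
    fix x y assume "map_head f x = map_head f y"
    with assms show "x = y" by (cases x; cases y) (auto simp: inj_eq)
  qed
  show "prefix (map_head f x) (map_head f y) \<longleftrightarrow> prefix x y" for x y
    using assms by (cases x; cases y) (auto simp: inj_eq)
qed

lemma shadow_node_Cons_iff [simp]:
  "shadow_node (Sh M) ((c, i) # q) \<longleftrightarrow> i < count M c \<and> shadow_node c q"
proof
  assume "shadow_node (Sh M) ((c, i) # q)"
  then show "i < count M c \<and> shadow_node c q" by (cases rule: shadow_node.cases) auto
next
  assume "i < count M c \<and> shadow_node c q"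
  moreover from this have "c \<in># M" by (auto intro: count_inI)
  ultimately show "shadow_node (Sh M) ((c, i) # q)" by (blast intro: shadow_node.child)
qed

lemma Ps_carrier_Sh: "Ps_carrier (Sh M) = {(c, i) # q | c i q. i < count M c \<and> shadow_node c q}"
  by (auto simp: Ps_carrier_def neq_Nil_conv)

lemma Collect_shadow_node_Sh: "Collect (shadow_node (Sh M)) = insert [] (Ps_carrier (Sh M))"
  by (auto simp: Ps_carrier_def intro: shadow_node.root)

lemma Ps_carrier_Sh_empty: "Ps_carrier (Sh {#}) = {}"
  by (simp add: Ps_carrier_Sh)

lemma Ps_carrier_Sh_single: "Ps_carrier (Sh {#c#}) = (#) (c, 0) ` Collect (shadow_node c)"
  by (auto simp: Ps_carrier_Sh split: if_splits)

text \<open>A node (c, i) # q of Sh M lies in the i-th copy of the child c of the root; in M + N the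
  copies coming from N are numbered after those coming from M.\<close>

lemma Ps_carrier_Sh_add:
  "Ps_carrier (Sh (M + N)) = Ps_carrier (Sh M) \<union> map_head (\<lambda>(c, i). (c, count M c + i)) ` Ps_carrier (Sh N)"
proof (intro equalityI subsetI)
  fix x assume "x \<in> Ps_carrier (Sh (M + N))"
  then obtain c i q where x: "x = (c, i) # q" "i < count M c + count N c" "shadow_node c q"
    by (auto simp: Ps_carrier_Sh)
  show "x \<in> Ps_carrier (Sh M) \<union> map_head (\<lambda>(c, i). (c, count M c + i)) ` Ps_carrier (Sh N)"
  proof (cases "i < count M c")
    case False
    with x have "(c, i - count M c) # q \<in> Ps_carrier (Sh N)"
      and "x = map_head (\<lambda>(c, i). (c, count M c + i)) ((c, i - count M c) # q)"
      by (auto simp: Ps_carrier_Sh)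
    then show ?thesis by blast
  qed (use x in \<open>auto simp: Ps_carrier_Sh\<close>)
qed (auto simp: Ps_carrier_Sh)

lemma prefix_iso_Ps_carrier_Sh_add:
  assumes "prefix_iso X (Ps_carrier (Sh M))" and "prefix_iso Y (Ps_carrier (Sh N))" and "[] \<notin> Y"
  shows "prefix_iso ((#) 0 ` X \<union> map_head Suc ` Y) (Ps_carrier (Sh (M + N)))"
  unfolding Ps_carrier_Sh_add
proof (rule prefix_iso_Un)
  show "prefix_iso ((#) 0 ` X) (Ps_carrier (Sh M))"
    using prefix_iso_trans[OF prefix_iso_sym[OF prefix_iso_Cons_image] assms(1)] .
  have "inj (\<lambda>(c, i). (c, count M c + i))" by (auto simp: inj_def)
  then show "prefix_iso (map_head Suc ` Y) (map_head (\<lambda>(c, i). (c, count M c + i)) ` Ps_carrier (Sh N))"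
    using prefix_iso_trans[OF prefix_iso_sym[OF prefix_iso_map_head_image[OF inj_Suc]]
        prefix_iso_trans[OF assms(2) prefix_iso_map_head_image]]
    by blast
  show "\<not> prefix x y \<and> \<not> prefix y x" if x: "x \<in> (#) 0 ` X" and y: "y \<in> map_head Suc ` Y" for x y
  proof -
    from y obtain z where "z \<in> Y" and "y = map_head Suc z" by blast
    with assms(3) obtain b zs where "y = Suc b # zs" by (cases z) auto
    with x show ?thesis by auto
  qed
  show "\<not> prefix x y \<and> \<not> prefix y x"
    if "x \<in> Ps_carrier (Sh M)" "y \<in> map_head (\<lambda>(c, i). (c, count M c + i)) ` Ps_carrier (Sh N)" for x y
  proof -
    from that obtain c i q d j r where "x = (c, i) # q" "i < count M c" "y = (d, count M d + j) # r"
      by (auto simp: Ps_carrier_Sh)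
    then show ?thesis by auto
  qed
qed

definition child_shadows :: "'a tree list \<Rightarrow> shadow multiset" where
  "child_shadows ts = mset (map sh (filter (\<lambda>c. c \<noteq> Leaf) ts))"

lemma sh_Node_child_shadows: "sh (Node a ts) = Sh (child_shadows ts)"
  by (simp add: child_shadows_def)

lemma child_shadows_append: "child_shadows (ts @ us) = child_shadows ts + child_shadows us"
  by (simp add: child_shadows_def)

lemma child_shadows_single: "child_shadows [t] = (if t = Leaf then {#} else {#sh t#})"
  by (simp add: child_shadows_def)

definition forest_nodes :: "'a tree list \<Rightarrow> nat list set" where
  "forest_nodes ts = (\<Union>i<length ts. (#) i ` nodes (ts ! i))"

lemma nodes_Node_forest_nodes: "nodes (Node a ts) = insert [] (forest_nodes ts)"
  by (simp add: nodes.simps forest_nodes_def)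

lemma Nil_notin_forest_nodes [simp]: "[] \<notin> forest_nodes ts"
  by (auto simp: forest_nodes_def)

lemma forest_nodes_Nil [simp]: "forest_nodes [] = {}"
  by (simp add: forest_nodes_def)

lemma forest_nodes_Cons: "forest_nodes (t # ts) = (#) 0 ` nodes t \<union> map_head Suc ` forest_nodes ts"
  by (auto simp: forest_nodes_def lessThan_Suc_eq_insert_0 image_iff)

lemma prefix_iso_forest_nodes:
  assumes "\<And>t. t \<in> set ts \<Longrightarrow> prefix_iso (nodes t) (Ps_carrier (Sh (child_shadows [t])))"
  shows "prefix_iso (forest_nodes ts) (Ps_carrier (Sh (child_shadows ts)))"
  using assms
proof (induction ts)
  case Nil
  then show ?case by (simp add: child_shadows_def Ps_carrier_Sh_empty prefix_iso_empty)
next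
  case (Cons t ts)
  have "prefix_iso (nodes t) (Ps_carrier (Sh (child_shadows [t])))" using Cons.prems by simp
  moreover have "prefix_iso (forest_nodes ts) (Ps_carrier (Sh (child_shadows ts)))"
    using Cons by simp
  ultimately show ?case
    unfolding forest_nodes_Cons child_shadows_append[of "[t]" ts, simplified]
    by (rule prefix_iso_Ps_carrier_Sh_add) simp
qed

lemma prefix_iso_nodes_child_shadows: "prefix_iso (nodes t) (Ps_carrier (Sh (child_shadows [t])))"
proof (induction t)
  case Leaf
  then show ?case by (simp add: child_shadows_def Ps_carrier_Sh_empty prefix_iso_empty)
next
  case (Node a ts)
  have "prefix_iso (nodes (Node a ts)) (Collect (shadow_node (sh (Node a ts))))"
    unfolding nodes_Node_forest_nodes sh_Node_child_shadows Collect_shadow_node_Sh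
    using Node.IH by (intro prefix_iso_insert_Nil prefix_iso_forest_nodes) (auto simp: Ps_carrier_def)
  moreover have "Ps_carrier (Sh (child_shadows [Node a ts]))
      = (#) (sh (Node a ts), 0) ` Collect (shadow_node (sh (Node a ts)))"
    by (simp only: child_shadows_single Ps_carrier_Sh_single tree.distinct if_False)
  ultimately show ?case
    using prefix_iso_trans prefix_iso_Cons_image by metis
qed

lemma forest_nodes_diff_Cons:
  "forest_nodes (t # ts) - forest_nodes (s # ss)
     = (#) 0 ` (nodes t - nodes s) \<union> map_head Suc ` (forest_nodes ts - forest_nodes ss)"
proof -
  have "inj (map_head Suc)" by (rule injI) (auto elim!: map_head.elims)
  moreover have "map_head Suc x \<noteq> 0 # p" "0 # p \<noteq> map_head Suc x" for x p by (cases x; simp)+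
  ultimately show ?thesis
    unfolding forest_nodes_Cons by (auto simp: inj_eq)
qed

lemma nodes_diff_Node: "nodes (Node b ts) - nodes (Node a ss) = forest_nodes ts - forest_nodes ss"
  by (auto simp: nodes_Node_forest_nodes)

lemma prefix_iso_nodes_diff:
  fixes s t :: "'a tree" and ss ts :: "'a tree list"
  shows "tree_prefix s t \<Longrightarrow>
      prefix_iso (nodes t - nodes s) (Ps_carrier (Sh (child_shadows (tree_cut s t))))"
    and "list_all2 tree_prefix ss ts \<Longrightarrow>
      prefix_iso (forest_nodes ts - forest_nodes ss) (Ps_carrier (Sh (child_shadows (forest_cut ss ts))))"
proof (induction s t and ss ts rule: tree_cut_forest_cut.induct)
  case (1 t)
  then show ?case using prefix_iso_nodes_child_shadows[of t] by simp
next
  case (3 a ss b ts)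
  then show ?case by (simp add: nodes_diff_Node)
next
  case (4 ts)
  then show ?case by (simp add: child_shadows_def Ps_carrier_Sh_empty prefix_iso_empty)
next
  case (6 s ss t ts)
  then show ?case
    unfolding forest_nodes_diff_Cons forest_cut.simps child_shadows_append
    by (intro prefix_iso_Ps_carrier_Sh_add) auto
qed auto

lemma map_tree_eq_Leaf_iff [simp]: "map_tree f t = Leaf \<longleftrightarrow> t = Leaf"
  by (cases t) auto

lemma sh_map_tree: "sh (map_tree f t) = sh t"
proof (induction t)
  case (Node a ts)
  then show ?case by (auto simp: filter_map comp_def intro!: image_mset_cong)
qed simp

lemma sh_diamond: "sh (diamond rs) = Sh (child_shadows rs)"
  by (simp add: diamond_def child_shadows_def filter_map comp_def sh_map_tree)

section \<open>The interval [s, t]\<close>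

lemma Ps_le_eq_prefix: "Ps_le = prefix"
  by (simp add: fun_eq_iff Ps_le_def prefix_def)

lemma inj_on_image_subset_iff:
  "inj_on f C \<Longrightarrow> A \<subseteq> C \<Longrightarrow> B \<subseteq> C \<Longrightarrow> f ` A \<subseteq> f ` B \<longleftrightarrow> A \<subseteq> B"
  by (auto simp: image_subset_iff) (metis inj_on_image_mem_iff subsetD)

lemma interval_lattice_iso_order_ideals:
  assumes st: "tree_prefix s t"
  obtains f :: "'a tree \<Rightarrow> (shadow \<times> nat) list set" where
    "bij_betw f {u. tree_prefix s u \<and> tree_prefix u t}
       (order_ideals (Ps_carrier (Sh (child_shadows (tree_cut s t)))) prefix)"
    and "\<And>x y. tree_prefix s x \<Longrightarrow> tree_prefix x t \<Longrightarrow> tree_prefix s y \<Longrightarrow> tree_prefix y t \<Longrightarrow>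
       (tree_prefix x y \<longleftrightarrow> f x \<subseteq> f y) \<and> f (tmeet x y) = f x \<inter> f y \<and> f (tjoin x y) = f x \<union> f y"
proof -
  define D where "D = nodes t - nodes s"
  obtain \<phi> where bij: "bij_betw \<phi> D (Ps_carrier (Sh (child_shadows (tree_cut s t))))"
    and le: "\<forall>x\<in>D. \<forall>y\<in>D. prefix (\<phi> x) (\<phi> y) \<longleftrightarrow> prefix x y"
    using prefix_iso_nodes_diff(1)[OF st] by (auto simp: prefix_iso_def D_def)
  then have inj: "inj_on \<phi> D" by (simp add: bij_betw_def)
  have ideals: "bij_betw ((`) \<phi>) (order_ideals D prefix)
      (order_ideals (Ps_carrier (Sh (child_shadows (tree_cut s t)))) prefix)"
    using bij le by (intro bij_betw_image_order_ideals) auto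
  define f :: "'a tree \<Rightarrow> _" where "f = (\<lambda>u. \<phi> ` (nodes u - nodes s))"
  have "bij_betw f {u. tree_prefix s u \<and> tree_prefix u t}
      (order_ideals (Ps_carrier (Sh (child_shadows (tree_cut s t)))) prefix)"
    using bij_betw_trans[OF bij_betw_interval_order_ideals[OF st] ideals[unfolded D_def]]
    by (simp add: f_def comp_def)
  moreover have "(tree_prefix x y \<longleftrightarrow> f x \<subseteq> f y) \<and> f (tmeet x y) = f x \<inter> f y \<and> f (tjoin x y) = f x \<union> f y"
    if x: "tree_prefix s x" "tree_prefix x t" and y: "tree_prefix s y" "tree_prefix y t" for x y
  proof -
    have s: "nodes s \<subseteq> nodes x" "nodes s \<subseteq> nodes y" using x y by (auto dest: nodes_mono)
    have D: "nodes x - nodes s \<subseteq> D" "nodes y - nodes s \<subseteq> D"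
      using x y by (auto simp: D_def dest: nodes_mono)
    have "tree_prefix x y \<longleftrightarrow> nodes x \<subseteq> nodes y"
      using x y nodes_mono tree_prefix_if_nodes_subset by blast
    also have "\<dots> \<longleftrightarrow> f x \<subseteq> f y"
      using s inj_on_image_subset_iff[OF inj D] by (auto simp: f_def)
    finally show ?thesis
      using nodes_tmeet[OF x(2) y(2)] nodes_tjoin[OF x(2) y(2)] inj_on_image_Int[OF inj D]
      by (auto simp: f_def Diff_Int_distrib2 Un_Diff image_Un)
  qed
  ultimately show ?thesis using that by blast
qed

theorem proposition3p10:
  fixes G :: "'a set" and ar :: "'a \<Rightarrow> nat" and s t :: "'a tree"
  assumes "finite G"
    and "\<forall>a\<in>G. ar a \<ge> 1"
    and "gtree G ar s" and "gtree G ar t"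
    and "gprefix G ar s t"
  shows "\<exists>f. bij_betw f {u. gtree G ar u \<and> gprefix G ar s u \<and> gprefix G ar u t}
                 (order_ideals (Ps_carrier (sh (diamond (tree_diff t s)))) Ps_le)
          \<and> (\<forall>x\<in>{u. gtree G ar u \<and> gprefix G ar s u \<and> gprefix G ar u t}.
             \<forall>y\<in>{u. gtree G ar u \<and> gprefix G ar s u \<and> gprefix G ar u t}.
               (gprefix G ar x y \<longleftrightarrow> f x \<subseteq> f y)
             \<and> f (tmeet x y) = f x \<inter> f y
             \<and> f (tjoin x y) = f x \<union> f y)"
proof -
  have st: "tree_prefix s t" using assms(4,5) gprefix_iff_tree_prefix by blast
  have le_iff: "gprefix G ar u v \<longleftrightarrow> tree_prefix u v" if "tree_prefix v t" for u v
    using that assms(4) gprefix_iff_tree_prefix gtree_tree_prefix by blast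
  have interval: "{u. gtree G ar u \<and> gprefix G ar s u \<and> gprefix G ar u t}
      = {u. tree_prefix s u \<and> tree_prefix u t}"
    using assms(4) by (auto simp: gprefix_iff_tree_prefix[OF assms(4)] le_iff intro: gtree_tree_prefix)
  obtain f where bij: "bij_betw f {u. tree_prefix s u \<and> tree_prefix u t}
      (order_ideals (Ps_carrier (Sh (child_shadows (tree_cut s t)))) prefix)"
    and lattice: "\<And>x y. tree_prefix s x \<Longrightarrow> tree_prefix x t \<Longrightarrow> tree_prefix s y \<Longrightarrow> tree_prefix y t \<Longrightarrow>
       (tree_prefix x y \<longleftrightarrow> f x \<subseteq> f y) \<and> f (tmeet x y) = f x \<inter> f y \<and> f (tjoin x y) = f x \<union> f y"
    using interval_lattice_iso_order_ideals[OF st] by blast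
  show ?thesis
    unfolding interval Ps_le_eq_prefix tree_diff_eq_tree_cut[OF st] sh_diamond
    using bij lattice le_iff by auto
qed

end
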